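(* Let $g:[0,1]\to\mathbb R$ be continuous and concave. Then the limit $$\Gamma_g=\lim_{n\to\infty}\frac1n\log\mathbb{E}\Big(e^{n g(H_n/n)}\Big)$$ exists (as a real number).
   Context: Standing setup (discrete-time Hawkes process, DTHP). Let $(a_i)_{i=0}^\infty$ be a sequence of strictly positive real numbers with $\sum_{i=0}^\infty a_i<1$ and $\sum_{i=1}^\infty i\,a_i<\infty$. The arrival process $\{\xi_n\}_{n\ge1}$ is a sequence of $\{0,1\}$-valued random variables on a probability space $(\Omega,\mathcal F,\mathbb P)$ with $\mathbb{P}(\xi_1=1)=a_0$, $\mathbb P(\xi_1=0)=1-a_0$, and for $n\ge2$, $$\mathbb{P}(\xi_n=1\mid \xi_1,\dots,\xi_{n-1})=a_0+\sum_{i=1}^{n-1}a_{n-i}\xi_i,\qquad \mathbb{P}(\xi_n=0\mid \xi_1,\dots,\xi_{n-1})=1-\Big(a_0+\sum_{i=1}^{n-1}a_{n-i}\xi_i\Big).$$ The DTHP is $H_n=\sum_{i=1}^n\xi_i$, and $\mathcal F_n=\sigma(\xi_1,\dots,\xi_n)$. *)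

theory Defs
  imports "HOL-Probability.Probability"
begin

text \<open>Conditional probability that xi_k = 1 given the history x_1..x_(k-1):
  a_0 + sum_{i=1}^{k-1} a_(k-i) x_i.\<close>
definition dthp_intensity :: "(nat \<Rightarrow> real) \<Rightarrow> (nat \<Rightarrow> real) \<Rightarrow> nat \<Rightarrow> real" where
  "dthp_intensity a x k = a 0 + (\<Sum>i\<in>{1..<k}. a (k - i) * x i)"

definition dthp_path_prob :: "(nat \<Rightarrow> real) \<Rightarrow> (nat \<Rightarrow> real) \<Rightarrow> nat \<Rightarrow> real" where
  "dthp_path_prob a x n =
     (\<Prod>k\<in>{1..n}. if x k = 1 then dthp_intensity a x k else 1 - dthp_intensity a x k)"

definition is_dthp :: "'w measure \<Rightarrow> (nat \<Rightarrow> real) \<Rightarrow> (nat \<Rightarrow> 'w \<Rightarrow> real) \<Rightarrow> bool" where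
  "is_dthp M a \<xi> \<longleftrightarrow> prob_space M \<and>
     (\<forall>n. \<xi> n \<in> borel_measurable M) \<and>
     (\<forall>n\<ge>1. \<forall>\<omega>\<in>space M. \<xi> n \<omega> \<in> {0, 1}) \<and>
     (\<forall>n. \<forall>x. (\<forall>i\<in>{1..n}. x i \<in> {0, 1}) \<longrightarrow>
        measure M {\<omega>\<in>space M. \<forall>i\<in>{1..n}. \<xi> i \<omega> = x i} = dthp_path_prob a x n)"

definition dthp_H :: "(nat \<Rightarrow> 'w \<Rightarrow> real) \<Rightarrow> nat \<Rightarrow> 'w \<Rightarrow> real" where
  "dthp_H \<xi> n \<omega> = (\<Sum>i\<in>{1..n}. \<xi> i \<omega>)"

end

(*
  Write W n for the expectation in the statement. It is a finite sum over the 0/1 paths of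
  length n. Split a path of length n + m into its first n and its last m steps. The last block
  sees the first only through the extra excitation e j = sum_(i<=n) a (n + j - i) xi i added to
  its intensities; raising a Bernoulli parameter by e j lowers the probability of either
  outcome by at most a factor exp (- e j / (1 - sum a)), and sum_j e j <= sum_k k a k.
  Together with concavity of g this gives C * W n * W m <= W (n + m) for a constant C > 0
  independent of n and m. So ln (C * W n) is superadditive, and it is at most n max |g|;
  Fekete's lemma gives convergence of ln (W n) / n.
*)
theory Submission
  imports Defs
begin

section \<open>Fekete's lemma\<close>

lemma superadditive_iterate:
  fixes u :: "nat \<Rightarrow> real"
  assumes super: "\<And>n m. 1 \<le> n \<Longrightarrow> 1 \<le> m \<Longrightarrow> u n + u m \<le> u (n + m)"
    and "1 \<le> m" "1 \<le> r"
  shows "real q * u m + u r \<le> u (q * m + r)"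
proof (induction q)
  case (Suc q)
  have "u m + u (q * m + r) \<le> u (m + (q * m + r))"
    by (rule super) (use assms in auto)
  with Suc show ?case by (simp add: algebra_simps)
qed simp

lemma superadditive_lower_bound:
  fixes u :: "nat \<Rightarrow> real"
  assumes super: "\<And>n m. 1 \<le> n \<Longrightarrow> 1 \<le> m \<Longrightarrow> u n + u m \<le> u (n + m)"
    and m: "1 \<le> m" and n: "1 \<le> n"
  shows "u m / m - 2 * (\<Sum>k\<in>{1..m}. \<bar>u k\<bar>) / n \<le> u n / n"
proof -
  define D where "D = (\<Sum>k\<in>{1..m}. \<bar>u k\<bar>)"
  define q where "q = (n - 1) div m"
  define r where "r = (n - 1) mod m + 1"
  have n_eq: "n = q * m + r" and r: "1 \<le> r" "r \<le> m"
    using n m by (auto simp: q_def r_def Suc_le_eq)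
  have "\<bar>u r\<bar> \<le> D" "\<bar>u m\<bar> \<le> D"
    unfolding D_def using r m by (auto intro!: member_le_sum)
  moreover have "real q * u m = real n * (u m / m) - real r * (u m / m)"
    using m by (simp add: n_eq field_simps)
  moreover have "real r * (u m / m) \<le> \<bar>u m\<bar>"
  proof -
    have "real r * (u m / m) = real r / m * u m"
      by simp
    also have "\<dots> \<le> real r / m * \<bar>u m\<bar>"
      by (intro mult_left_mono) auto
    also have "\<dots> \<le> \<bar>u m\<bar>"
      using r by (intro mult_left_le_one_le) auto
    finally show ?thesis .
  qed
  moreover have "real q * u m + u r \<le> u n"
    unfolding n_eq using super m r(1) by (rule superadditive_iterate)
  ultimately have "real n * (u m / m) - 2 * D \<le> u n"
    by (smt (verit))
  then have "(real n * (u m / m) - 2 * D) / n \<le> u n / n"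
    by (rule divide_right_mono) simp
  moreover have "(real n * (u m / m) - 2 * D) / n = u m / m - 2 * D / n"
    using n by (simp add: diff_divide_distrib)
  ultimately show ?thesis
    unfolding D_def by simp
qed

lemma fekete_superadditive:
  fixes u :: "nat \<Rightarrow> real"
  assumes super: "\<And>n m. 1 \<le> n \<Longrightarrow> 1 \<le> m \<Longrightarrow> u n + u m \<le> u (n + m)"
    and bound: "\<And>n. 1 \<le> n \<Longrightarrow> u n / n \<le> B"
  shows "(\<lambda>n. u n / n) \<longlonglongrightarrow> (SUP n\<in>{1..}. u n / n)"
proof -
  have bdd: "bdd_above ((\<lambda>n. u n / n) ` {1..})"
    by (rule bdd_aboveI2[where M = B]) (use bound in auto)
  show ?thesis
  proof (rule order_tendstoI)
    fix y assume "y < (SUP n\<in>{1..}. u n / n)"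
    then obtain m where m: "1 \<le> m" "y < u m / m"
      using less_cSUP_iff[OF _ bdd] by auto
    define D where "D = 2 * (\<Sum>k\<in>{1..m}. \<bar>u k\<bar>)"
    have "(\<lambda>n. u m / m - D / n) \<longlonglongrightarrow> u m / m - 0"
      by (intro tendsto_intros)
    then have "eventually (\<lambda>n. y < u m / m - D / n) sequentially"
      using m by (intro order_tendstoD) auto
    then show "eventually (\<lambda>n. y < u n / n) sequentially"
      using eventually_ge_at_top[of 1]
    proof eventually_elim
      case (elim n)
      then show ?case
        using superadditive_lower_bound[OF super m(1), of n] unfolding D_def by linarith
    qed
  next
    fix y assume y: "(SUP n\<in>{1..}. u n / n) < y"
    show "eventually (\<lambda>n. u n / n < y) sequentially"
      using eventually_ge_at_top[of 1]
      by eventually_elim (use y cSUP_upper[OF _ bdd] in fastforce)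
  qed
qed

lemma supermultiplicative_ln_div_convergent:
  fixes w :: "nat \<Rightarrow> real"
  assumes pos: "\<And>n. 1 \<le> n \<Longrightarrow> 0 < w n" and c: "0 < c"
    and super: "\<And>n m. 1 \<le> n \<Longrightarrow> 1 \<le> m \<Longrightarrow> c * w n * w m \<le> w (n + m)"
    and bound: "\<And>n. 1 \<le> n \<Longrightarrow> w n \<le> exp (n * B)"
  shows "\<exists>L. (\<lambda>n. ln (w n) / n) \<longlonglongrightarrow> L"
proof -
  define u where "u n = ln (c * w n)" for n
  have "u n + u m \<le> u (n + m)" if "1 \<le> n" "1 \<le> m" for n m
  proof -
    have "u n + u m = ln (c * (c * w n * w m))"
      using pos[OF that(1)] pos[OF that(2)] c by (simp add: u_def ln_mult)
    also have "\<dots> \<le> u (n + m)"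
      unfolding u_def using super[OF that] pos[OF that(1)] pos[OF that(2)] pos[of "n + m"] that c
      by simp
    finally show ?thesis .
  qed
  moreover have "u n / n \<le> \<bar>ln c\<bar> + B" if n: "1 \<le> n" for n
  proof -
    have "u n \<le> \<bar>ln c\<bar> + n * B"
      using ln_le_cancel_iff[of "w n" "exp (n * B)"] bound[OF n] pos[OF n] c
      by (simp add: u_def ln_mult)
    also have "\<dots> \<le> n * (\<bar>ln c\<bar> + B)"
      using n by (simp add: algebra_simps mult_le_cancel_right1)
    finally show ?thesis
      using n by (simp add: field_simps)
  qed
  ultimately have "(\<lambda>n. u n / n) \<longlonglongrightarrow> (SUP n\<in>{1..}. u n / n)"
    by (rule fekete_superadditive)
  then have "(\<lambda>n. u n / n - ln c / n) \<longlonglongrightarrow> (SUP n\<in>{1..}. u n / n) - 0"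
    by (intro tendsto_intros)
  moreover have "eventually (\<lambda>n. u n / n - ln c / n = ln (w n) / n) sequentially"
    using eventually_ge_at_top[of 1]
  proof eventually_elim
    case (elim n)
    then show ?case
      using pos[OF elim] c by (simp add: u_def ln_mult add_divide_distrib)
  qed
  ultimately have "(\<lambda>n. ln (w n) / n) \<longlonglongrightarrow> (SUP n\<in>{1..}. u n / n) - 0"
    by (rule Lim_transform_eventually)
  then show ?thesis
    by (rule exI)
qed

lemma concave_on_weighted:
  fixes g :: "real \<Rightarrow> real"
  assumes g: "concave_on I g" and p: "p \<in> I" and q: "q \<in> I" and "0 < s" "0 < t"
  shows "s * g p + t * g q \<le> (s + t) * g ((s * p + t * q) / (s + t))"
proof -
  define v where "v = t / (s + t)"
  have v: "0 \<le> v" "v \<le> 1" "1 - v = s / (s + t)"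
    using assms by (auto simp: v_def field_simps)
  have "(1 - v) * g p + v * g q \<le> g ((1 - v) *\<^sub>R p + v *\<^sub>R q)"
    using v p q by (intro concave_onD[OF g]) auto
  then have "(s + t) * ((1 - v) * g p + v * g q) \<le> (s + t) * g ((1 - v) *\<^sub>R p + v *\<^sub>R q)"
    using assms by (intro mult_left_mono) auto
  moreover have "(s + t) * ((1 - v) * g p + v * g q) = ((s + t) * (1 - v)) * g p + ((s + t) * v) * g q"
    by (simp add: algebra_simps)
  moreover have "(s + t) * (1 - v) = s" "(s + t) * v = t"
    using assms by (auto simp: v_def field_simps)
  moreover have "(1 - v) *\<^sub>R p + v *\<^sub>R q = (s * p + t * q) / (s + t)"
    unfolding v(3) by (simp add: v_def add_divide_distrib)
  ultimately show ?thesis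
    by simp
qed

text \<open>For the outcome \<open>0\<close> this is \<open>1 + e / (1 - S) \<le> exp (e / (1 - S))\<close>, since
  \<open>1 - l - e \<ge> 1 - S\<close>.\<close>

lemma bernoulli_excitation_ge:
  fixes l e S :: real
  assumes "0 \<le> l" "0 \<le> e" "l + e \<le> S" "S < 1"
  shows "exp (- e / (1 - S)) * (if b then l else 1 - l) \<le> (if b then l + e else 1 - l - e)"
proof (cases b)
  case True
  have "exp (- e / (1 - S)) * l \<le> l"
    using assms by (intro mult_left_le_one_le) auto
  then show ?thesis
    using True assms by simp
next
  case False
  define d where "d = 1 - S"
  have d: "0 < d" "d \<le> 1 - l - e"
    using assms by (auto simp: d_def)
  have "1 - l \<le> (1 - l - e) * (1 + e / d)"
  proof -
    have "e * d \<le> e * (1 - l - e)"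
      using d assms by (intro mult_left_mono) auto
    then have "e \<le> (1 - l - e) * (e / d)"
      using d by (simp add: field_simps)
    then show ?thesis
      by (simp add: algebra_simps)
  qed
  also have "\<dots> \<le> (1 - l - e) * exp (e / d)"
    using d by (intro mult_left_mono exp_ge_add_one_self) auto
  finally show ?thesis
    using False by (simp add: d_def exp_minus field_simps)
qed

definition binary_paths :: "nat \<Rightarrow> (nat \<Rightarrow> real) set" where
  "binary_paths n = {1..n} \<rightarrow>\<^sub>E {0, 1}"

lemma finite_binary_paths: "finite (binary_paths n)"
  unfolding binary_paths_def by (intro finite_PiE) auto

lemma binary_paths_values: "x \<in> binary_paths n \<Longrightarrow> i \<in> {1..n} \<Longrightarrow> x i \<in> {0, 1}"
  unfolding binary_paths_def by (rule PiE_mem)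

lemma binary_paths_range: "x \<in> binary_paths n \<Longrightarrow> i \<in> {1..n} \<Longrightarrow> x i \<in> {0..1}"
  using binary_paths_values[of x n i] by auto

definition path_append :: "nat \<Rightarrow> nat \<Rightarrow> (nat \<Rightarrow> real) \<Rightarrow> (nat \<Rightarrow> real) \<Rightarrow> nat \<Rightarrow> real" where
  "path_append n m y z i =
     (if i \<in> {1..n} then y i else if i \<in> {n+1..n+m} then z (i - n) else undefined)"

lemma bij_betw_path_append:
  "bij_betw (\<lambda>(y, z). path_append n m y z) (binary_paths n \<times> binary_paths m) (binary_paths (n + m))"
proof (rule bij_betw_byWitness[where f' = "\<lambda>x. (restrict x {1..n}, \<lambda>j\<in>{1..m}. x (n + j))"])
  show "(\<lambda>(y, z). path_append n m y z) ` (binary_paths n \<times> binary_paths m) \<subseteq> binary_paths (n + m)"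
    by (fastforce simp: binary_paths_def path_append_def)
  show "(\<lambda>x. (restrict x {1..n}, \<lambda>j\<in>{1..m}. x (n + j))) ` binary_paths (n + m)
          \<subseteq> binary_paths n \<times> binary_paths m"
    by (auto simp: binary_paths_def)
qed (auto simp: binary_paths_def path_append_def fun_eq_iff PiE_def extensional_def)

lemma sum_binary_paths_add:
  "(\<Sum>x\<in>binary_paths (n + m). f x) = (\<Sum>y\<in>binary_paths n. \<Sum>z\<in>binary_paths m. f (path_append n m y z))"
  by (simp add: sum.reindex_bij_betw[OF bij_betw_path_append, symmetric] sum.cartesian_product')

lemma sum_path_append:
  "(\<Sum>i\<in>{1..n+m}. path_append n m y z i) = (\<Sum>i\<in>{1..n}. y i) + (\<Sum>j\<in>{1..m}. z j)"
proof -
  have "(\<Sum>i\<in>{1..n+m}. path_append n m y z i)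
      = (\<Sum>i\<in>{1..n}. path_append n m y z i) + (\<Sum>i\<in>{n+1..n+m}. path_append n m y z i)"
    by (rule sum.ub_add_nat) simp
  also have "(\<Sum>i\<in>{n+1..n+m}. path_append n m y z i) = (\<Sum>j\<in>{1..m}. path_append n m y z (n + j))"
    using sum.shift_bounds_cl_nat_ivl[of "path_append n m y z" 1 n m] by (simp add: add.commute)
  finally show ?thesis
    by (simp add: path_append_def)
qed

section \<open>Path probabilities of the DTHP\<close>

lemma dthp_integral_eq_path_sum:
  assumes dthp: "is_dthp M a \<xi>"
  shows "(\<integral>\<omega>. F (\<lambda>i\<in>{1..n}. \<xi> i \<omega>) \<partial>M) = (\<Sum>x\<in>binary_paths n. dthp_path_prob a x n * F x)"
proof -
  interpret prob_space M
    using dthp unfolding is_dthp_def by simp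
  have [measurable]: "\<xi> i \<in> borel_measurable M" for i
    using dthp unfolding is_dthp_def by simp
  define A where "A x = {\<omega>\<in>space M. \<forall>i\<in>{1..n}. \<xi> i \<omega> = x i}" for x
  have A_sets: "A x \<in> sets M" for x
    unfolding A_def by measurable
  have path: "(\<lambda>i\<in>{1..n}. \<xi> i \<omega>) \<in> binary_paths n" if "\<omega> \<in> space M" for \<omega>
    using dthp that unfolding is_dthp_def binary_paths_def by auto
  have "F (\<lambda>i\<in>{1..n}. \<xi> i \<omega>) = (\<Sum>x\<in>binary_paths n. indicator (A x) \<omega> * F x)"
    if "\<omega> \<in> space M" for \<omega>
  proof -
    have "\<omega> \<in> A x \<longleftrightarrow> x = (\<lambda>i\<in>{1..n}. \<xi> i \<omega>)" if "x \<in> binary_paths n" for x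
      using that \<open>\<omega> \<in> space M\<close>
      by (auto simp: A_def binary_paths_def fun_eq_iff PiE_def extensional_def)
    then show ?thesis
      using path[OF \<open>\<omega> \<in> space M\<close>] finite_binary_paths
      by (simp add: indicator_def if_distrib[of "\<lambda>t. t * _"] sum.If_cases)
  qed
  then have "(\<integral>\<omega>. F (\<lambda>i\<in>{1..n}. \<xi> i \<omega>) \<partial>M) = (\<integral>\<omega>. (\<Sum>x\<in>binary_paths n. indicator (A x) \<omega> * F x) \<partial>M)"
    by (rule Bochner_Integration.integral_cong[OF refl])
  also have "\<dots> = (\<Sum>x\<in>binary_paths n. \<integral>\<omega>. indicator (A x) \<omega> * F x \<partial>M)"
    using A_sets by (intro Bochner_Integration.integral_sum integrable_mult_left) (auto simp: less_top[symmetric])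
  also have "\<dots> = (\<Sum>x\<in>binary_paths n. measure M (A x) * F x)"
    using A_sets by simp
  also have "\<dots> = (\<Sum>x\<in>binary_paths n. dthp_path_prob a x n * F x)"
  proof (rule sum.cong[OF refl])
    fix x assume "x \<in> binary_paths n"
    then have "measure M (A x) = dthp_path_prob a x n"
      using dthp binary_paths_values unfolding is_dthp_def A_def by blast
    then show "measure M (A x) * F x = dthp_path_prob a x n * F x"
      by simp
  qed
  finally show ?thesis .
qed

lemma dthp_path_prob_sum_eq_1:
  assumes "is_dthp M a \<xi>"
  shows "(\<Sum>x\<in>binary_paths n. dthp_path_prob a x n) = 1"
proof -
  interpret prob_space M
    using assms unfolding is_dthp_def by simp
  show ?thesis
    using dthp_integral_eq_path_sum[OF assms, of "\<lambda>_. 1" n] by (simp add: prob_space)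
qed

definition dthp_factor :: "(nat \<Rightarrow> real) \<Rightarrow> (nat \<Rightarrow> real) \<Rightarrow> nat \<Rightarrow> real" where
  "dthp_factor a x k = (if x k = 1 then dthp_intensity a x k else 1 - dthp_intensity a x k)"

lemma dthp_path_prob_eq_prod: "dthp_path_prob a x n = (\<Prod>k\<in>{1..n}. dthp_factor a x k)"
  unfolding dthp_path_prob_def dthp_factor_def ..

lemma dthp_intensity_cong:
  "(\<And>i. i \<in> {1..<k} \<Longrightarrow> x i = y i) \<Longrightarrow> dthp_intensity a x k = dthp_intensity a y k"
  unfolding dthp_intensity_def by simp

lemma dthp_factor_cong:
  assumes "\<And>i. i \<in> {1..k} \<Longrightarrow> x i = y i" and "1 \<le> k"
  shows "dthp_factor a x k = dthp_factor a y k"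
proof -
  have "dthp_intensity a x k = dthp_intensity a y k"
    using assms(1) by (intro dthp_intensity_cong) auto
  moreover have "x k = y k"
    using assms by auto
  ultimately show ?thesis
    unfolding dthp_factor_def by simp
qed

lemma dthp_path_prob_cong:
  "(\<And>i. i \<in> {1..n} \<Longrightarrow> x i = y i) \<Longrightarrow> dthp_path_prob a x n = dthp_path_prob a y n"
  unfolding dthp_path_prob_eq_prod by (intro prod.cong refl dthp_factor_cong) auto

lemma dthp_path_prob_add:
  "dthp_path_prob a x (n + m) = dthp_path_prob a x n * (\<Prod>j\<in>{1..m}. dthp_factor a x (n + j))"
proof -
  have "dthp_path_prob a x (n + m) = dthp_path_prob a x n * (\<Prod>k\<in>{n+1..n+m}. dthp_factor a x k)"
    unfolding dthp_path_prob_eq_prod by (rule prod.ub_add_nat) simp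
  also have "(\<Prod>k\<in>{n+1..n+m}. dthp_factor a x k) = (\<Prod>j\<in>{1..m}. dthp_factor a x (n + j))"
    using prod.shift_bounds_cl_nat_ivl[of "dthp_factor a x" 1 n m] by (simp add: add.commute)
  finally show ?thesis .
qed

lemma dthp_intensity_shift:
  assumes "1 \<le> j"
  shows "dthp_intensity a x (n + j) =
    dthp_intensity a (\<lambda>i. x (n + i)) j + (\<Sum>i\<in>{1..n}. a (n + j - i) * x i)"
proof -
  have "{1..<n+j} = {1..n} \<union> {n+1..<n+j}" "{1..n} \<inter> {n+1..<n+j} = {}"
    using assms by auto
  then have "(\<Sum>i\<in>{1..<n+j}. a (n + j - i) * x i)
      = (\<Sum>i\<in>{1..n}. a (n + j - i) * x i) + (\<Sum>i\<in>{n+1..<n+j}. a (n + j - i) * x i)"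
    by (simp add: sum.union_disjoint)
  also have "(\<Sum>i\<in>{n+1..<n+j}. a (n + j - i) * x i) = (\<Sum>i\<in>{1..<j}. a (j - i) * x (n + i))"
    using sum.shift_bounds_nat_ivl[of "\<lambda>i. a (n + j - i) * x i" 1 n j] by (simp add: add.commute)
  finally show ?thesis
    unfolding dthp_intensity_def by simp
qed

lemma dthp_intensity_bounds:
  assumes a_nonneg: "\<And>i. 0 \<le> a i" and a_summable: "summable a"
    and x: "\<And>i. i \<in> {1..<k} \<Longrightarrow> x i \<in> {0..1}"
  shows "0 \<le> dthp_intensity a x k" "dthp_intensity a x k \<le> suminf a"
proof -
  show "0 \<le> dthp_intensity a x k"
    unfolding dthp_intensity_def using a_nonneg x by (intro add_nonneg_nonneg sum_nonneg) auto
  have "(\<Sum>i\<in>{1..<k}. a (k - i) * x i) \<le> (\<Sum>i\<in>{1..<k}. a (k - i))"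
    using a_nonneg x by (intro sum_mono) (simp add: mult_left_le)
  also have "\<dots> = sum a ((\<lambda>i. k - i) ` {1..<k})"
    by (subst sum.reindex) (auto simp: inj_on_def)
  finally have "dthp_intensity a x k \<le> sum a (insert 0 ((\<lambda>i. k - i) ` {1..<k}))"
    unfolding dthp_intensity_def by (subst sum.insert) auto
  also have "\<dots> \<le> suminf a"
    using a_summable a_nonneg by (intro sum_le_suminf) auto
  finally show "dthp_intensity a x k \<le> suminf a" .
qed

lemma dthp_factor_nonneg:
  assumes "\<And>i. 0 \<le> a i" "summable a" "suminf a \<le> 1"
    and "\<And>i. i \<in> {1..<k} \<Longrightarrow> x i \<in> {0..1}"
  shows "0 \<le> dthp_factor a x k"
  using dthp_intensity_bounds[where a = a and k = k and x = x, OF assms(1,2,4)] assms(3)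
  unfolding dthp_factor_def by simp

lemma dthp_path_prob_nonneg:
  assumes "\<And>i. 0 \<le> a i" "summable a" "suminf a \<le> 1"
    and "\<And>i. i \<in> {1..n} \<Longrightarrow> x i \<in> {0..1}"
  shows "0 \<le> dthp_path_prob a x n"
  unfolding dthp_path_prob_eq_prod using assms by (intro prod_nonneg dthp_factor_nonneg) auto

lemma excitation_sum_le:
  assumes a_nonneg: "\<And>i. 0 \<le> a i" and a_mean: "summable (\<lambda>k. real k * a k)"
    and x: "\<And>i. i \<in> {1..n} \<Longrightarrow> x i \<in> {0..1}"
  shows "(\<Sum>j\<in>{1..m}. \<Sum>i\<in>{1..n}. a (n + j - i) * x i) \<le> (\<Sum>k. real k * a k)"
proof -
  have "(\<Sum>i\<in>{1..n}. a (n + j - i) * x i) \<le> (\<Sum>k<n+m. if j \<le> k then a k else 0)"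
    if "j \<in> {1..m}" for j
  proof -
    have "(\<Sum>i\<in>{1..n}. a (n + j - i) * x i) \<le> (\<Sum>i\<in>{1..n}. a (n + j - i))"
      using a_nonneg x by (intro sum_mono) (simp add: mult_left_le)
    also have "\<dots> = (\<Sum>k\<in>(\<lambda>i. n + j - i) ` {1..n}. if j \<le> k then a k else 0)"
      by (subst sum.reindex) (auto simp: inj_on_def intro!: sum.cong)
    also have "\<dots> \<le> (\<Sum>k<n+m. if j \<le> k then a k else 0)"
      using that a_nonneg by (intro sum_mono2) auto
    finally show ?thesis .
  qed
  then have "(\<Sum>j\<in>{1..m}. \<Sum>i\<in>{1..n}. a (n + j - i) * x i)
      \<le> (\<Sum>k<n+m. \<Sum>j\<in>{1..m}. if j \<le> k then a k else 0)"
    by (subst sum.swap) (rule sum_mono)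
  also have "\<dots> \<le> (\<Sum>k<n+m. real k * a k)"
  proof (rule sum_mono)
    fix k
    have "(\<Sum>j\<in>{1..m}. if j \<le> k then a k else 0) = (\<Sum>j\<in>{1..min m k}. a k)"
      by (rule sum.mono_neutral_cong_right) auto
    also have "\<dots> \<le> real k * a k"
      using a_nonneg by (simp add: mult_right_mono)
    finally show "(\<Sum>j\<in>{1..m}. if j \<le> k then a k else 0) \<le> real k * a k" .
  qed
  also have "\<dots> \<le> (\<Sum>k. real k * a k)"
    using a_mean a_nonneg by (intro sum_le_suminf) auto
  finally show ?thesis .
qed

section \<open>Supermultiplicativity of the exponential moments\<close>

lemma dthp_factor_shift_ge:
  assumes a_nonneg: "\<And>i. 0 \<le> a i" and a_summable: "summable a" and a_sum: "suminf a < 1"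
    and x: "\<And>i. i \<in> {1..n+j} \<Longrightarrow> x i \<in> {0..1}" and j: "1 \<le> j"
  shows "exp (- (\<Sum>i\<in>{1..n}. a (n + j - i) * x i) / (1 - suminf a)) * dthp_factor a (\<lambda>i. x (n + i)) j
    \<le> dthp_factor a x (n + j)"
proof -
  define l where "l = dthp_intensity a (\<lambda>i. x (n + i)) j"
  define e where "e = (\<Sum>i\<in>{1..n}. a (n + j - i) * x i)"
  have "0 \<le> l"
    unfolding l_def using a_nonneg a_summable x by (intro dthp_intensity_bounds) auto
  moreover have "0 \<le> e"
    unfolding e_def using a_nonneg x by (intro sum_nonneg) auto
  moreover have intensity: "dthp_intensity a x (n + j) = l + e"
    unfolding l_def e_def using j by (rule dthp_intensity_shift)
  moreover have "dthp_intensity a x (n + j) \<le> suminf a"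
    using a_nonneg a_summable x by (intro dthp_intensity_bounds) auto
  ultimately have "exp (- e / (1 - suminf a)) * (if x (n + j) = 1 then l else 1 - l)
      \<le> (if x (n + j) = 1 then l + e else 1 - l - e)"
    using a_sum by (intro bernoulli_excitation_ge) auto
  moreover have "dthp_factor a (\<lambda>i. x (n + i)) j = (if x (n + j) = 1 then l else 1 - l)"
    unfolding dthp_factor_def l_def by simp
  moreover have "dthp_factor a x (n + j) = (if x (n + j) = 1 then l + e else 1 - l - e)"
    unfolding dthp_factor_def intensity by simp
  ultimately show ?thesis
    unfolding e_def by simp
qed

lemma dthp_block_prob_ge:
  assumes a_nonneg: "\<And>i. 0 \<le> a i" and a_summable: "summable a" and a_sum: "suminf a < 1"
    and a_mean: "summable (\<lambda>k. real k * a k)"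
    and x: "\<And>i. i \<in> {1..n+m} \<Longrightarrow> x i \<in> {0..1}"
  shows "exp (- (\<Sum>k. real k * a k) / (1 - suminf a)) * dthp_path_prob a (\<lambda>i. x (n + i)) m
    \<le> (\<Prod>j\<in>{1..m}. dthp_factor a x (n + j))"
proof -
  define e where "e j = (\<Sum>i\<in>{1..n}. a (n + j - i) * x i)" for j
  define d where "d = 1 - suminf a"
  have d: "0 < d"
    using a_sum by (simp add: d_def)
  have "exp (- (\<Sum>k. real k * a k) / d) \<le> exp (- (\<Sum>j\<in>{1..m}. e j) / d)"
    using excitation_sum_le[OF a_nonneg a_mean, of n x m] x d
    unfolding e_def by (simp add: divide_right_mono)
  also have "\<dots> = (\<Prod>j\<in>{1..m}. exp (- e j / d))"
    by (simp add: exp_sum[symmetric] sum_negf sum_divide_distrib)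
  finally have "exp (- (\<Sum>k. real k * a k) / d) * dthp_path_prob a (\<lambda>i. x (n + i)) m
      \<le> (\<Prod>j\<in>{1..m}. exp (- e j / d)) * (\<Prod>j\<in>{1..m}. dthp_factor a (\<lambda>i. x (n + i)) j)"
    unfolding dthp_path_prob_eq_prod using a_nonneg a_summable a_sum x
    by (intro mult_right_mono prod_nonneg dthp_factor_nonneg) auto
  also have "\<dots> = (\<Prod>j\<in>{1..m}. exp (- e j / d) * dthp_factor a (\<lambda>i. x (n + i)) j)"
    by (simp add: prod.distrib)
  also have "\<dots> \<le> (\<Prod>j\<in>{1..m}. dthp_factor a x (n + j))"
  proof (rule prod_mono)
    fix j assume j: "j \<in> {1..m}"
    have "0 \<le> dthp_factor a (\<lambda>i. x (n + i)) j"
      using a_nonneg a_summable a_sum x j by (intro dthp_factor_nonneg) auto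
    moreover have "exp (- e j / d) * dthp_factor a (\<lambda>i. x (n + i)) j \<le> dthp_factor a x (n + j)"
      unfolding e_def d_def using a_nonneg a_summable a_sum x j by (intro dthp_factor_shift_ge) auto
    ultimately show "0 \<le> exp (- e j / d) * dthp_factor a (\<lambda>i. x (n + i)) j \<and>
        exp (- e j / d) * dthp_factor a (\<lambda>i. x (n + i)) j \<le> dthp_factor a x (n + j)"
      by simp
  qed
  finally show ?thesis
    unfolding d_def .
qed

lemma dthp_path_prob_append_ge:
  assumes a_nonneg: "\<And>i. 0 \<le> a i" and a_summable: "summable a" and a_sum: "suminf a < 1"
    and a_mean: "summable (\<lambda>k. real k * a k)"
    and y: "y \<in> binary_paths n" and z: "z \<in> binary_paths m"
  shows "exp (- (\<Sum>k. real k * a k) / (1 - suminf a)) * dthp_path_prob a y n * dthp_path_prob a z m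
    \<le> dthp_path_prob a (path_append n m y z) (n + m)"
proof -
  define x where "x = path_append n m y z"
  have "x \<in> binary_paths (n + m)"
    unfolding x_def using bij_betw_apply[OF bij_betw_path_append, of "(y, z)"] y z by simp
  then have x: "\<And>i. i \<in> {1..n+m} \<Longrightarrow> x i \<in> {0..1}"
    by (rule binary_paths_range)
  have "dthp_path_prob a y n = dthp_path_prob a x n"
    by (rule dthp_path_prob_cong) (simp add: x_def path_append_def)
  moreover have "dthp_path_prob a z m = dthp_path_prob a (\<lambda>i. x (n + i)) m"
    by (rule dthp_path_prob_cong) (simp add: x_def path_append_def)
  ultimately have "exp (- (\<Sum>k. real k * a k) / (1 - suminf a)) * dthp_path_prob a y n * dthp_path_prob a z m
      = dthp_path_prob a x n * (exp (- (\<Sum>k. real k * a k) / (1 - suminf a)) * dthp_path_prob a (\<lambda>i. x (n + i)) m)"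
    by simp
  also have "\<dots> \<le> dthp_path_prob a x n * (\<Prod>j\<in>{1..m}. dthp_factor a x (n + j))"
    using a_nonneg a_summable a_sum a_mean x
    by (intro mult_left_mono dthp_block_prob_ge dthp_path_prob_nonneg) auto
  finally show ?thesis
    unfolding dthp_path_prob_add x_def .
qed

definition dthp_exp_moment :: "(nat \<Rightarrow> real) \<Rightarrow> (real \<Rightarrow> real) \<Rightarrow> nat \<Rightarrow> real" where
  "dthp_exp_moment a g n =
     (\<Sum>x\<in>binary_paths n. dthp_path_prob a x n * exp (n * g ((\<Sum>i\<in>{1..n}. x i) / n)))"

lemma dthp_integral_eq_exp_moment:
  assumes "is_dthp M a \<xi>"
  shows "(\<integral>\<omega>. exp (n * g (dthp_H \<xi> n \<omega> / n)) \<partial>M) = dthp_exp_moment a g n"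
  using dthp_integral_eq_path_sum[OF assms, of "\<lambda>x. exp (n * g ((\<Sum>i\<in>{1..n}. x i) / n))" n]
  unfolding dthp_H_def dthp_exp_moment_def by simp

lemma binary_path_mean_range:
  assumes "x \<in> binary_paths n" "1 \<le> n"
  shows "(\<Sum>i\<in>{1..n}. x i) / n \<in> {0..1}"
proof -
  have "0 \<le> (\<Sum>i\<in>{1..n}. x i)"
    using binary_paths_range[OF assms(1)] by (intro sum_nonneg) auto
  moreover have "(\<Sum>i\<in>{1..n}. x i) \<le> (\<Sum>i\<in>{1..n}. 1)"
    using binary_paths_range[OF assms(1)] by (intro sum_mono) auto
  ultimately show ?thesis
    using assms(2) by simp
qed

lemma dthp_exp_moment_bounds:
  assumes dthp: "is_dthp M a \<xi>"
    and a_nonneg: "\<And>i. 0 \<le> a i" and a_summable: "summable a" and a_sum: "suminf a \<le> 1"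
    and g: "\<And>t. t \<in> {0..1} \<Longrightarrow> \<bar>g t\<bar> \<le> B" and n: "1 \<le> n"
  shows "dthp_exp_moment a g n \<in> {exp (- n * B)..exp (n * B)}"
proof -
  have "(\<Sum>x\<in>binary_paths n. dthp_path_prob a x n *\<^sub>R exp (n * g ((\<Sum>i\<in>{1..n}. x i) / n)))
      \<in> {exp (- n * B)..exp (n * B)}"
  proof (rule convex_sum)
    show "(\<Sum>x\<in>binary_paths n. dthp_path_prob a x n) = 1"
      using dthp by (rule dthp_path_prob_sum_eq_1)
    show "0 \<le> dthp_path_prob a x n" if "x \<in> binary_paths n" for x
      using a_nonneg a_summable a_sum binary_paths_range[OF that] by (intro dthp_path_prob_nonneg) auto
    show "exp (n * g ((\<Sum>i\<in>{1..n}. x i) / n)) \<in> {exp (- n * B)..exp (n * B)}"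
      if "x \<in> binary_paths n" for x
    proof -
      define G where "G = g ((\<Sum>i\<in>{1..n}. x i) / n)"
      have "\<bar>G\<bar> \<le> B"
        unfolding G_def using binary_path_mean_range[OF that n] by (rule g)
      then have "n * (- B) \<le> n * G"
        by (intro mult_left_mono) auto
      moreover have "n * G \<le> n * B"
        using \<open>\<bar>G\<bar> \<le> B\<close> by (intro mult_left_mono) auto
      ultimately show ?thesis
        unfolding G_def by simp
    qed
  qed (simp_all add: finite_binary_paths)
  then show ?thesis
    unfolding dthp_exp_moment_def by simp
qed

lemma concave_on_path_append:
  assumes g: "concave_on {0..1} g" and y: "y \<in> binary_paths n" and z: "z \<in> binary_paths m"
    and n: "1 \<le> n" and m: "1 \<le> m"
  shows "n * g ((\<Sum>i\<in>{1..n}. y i) / n) + m * g ((\<Sum>j\<in>{1..m}. z j) / m)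
    \<le> (n + m) * g ((\<Sum>i\<in>{1..n+m}. path_append n m y z i) / (n + m))"
proof -
  have "n * g ((\<Sum>i\<in>{1..n}. y i) / n) + m * g ((\<Sum>j\<in>{1..m}. z j) / m)
      \<le> (real n + real m) *
        g ((n * ((\<Sum>i\<in>{1..n}. y i) / n) + m * ((\<Sum>j\<in>{1..m}. z j) / m)) / (real n + real m))"
    using n m by (intro concave_on_weighted[OF g] binary_path_mean_range y z) auto
  also have "(n * ((\<Sum>i\<in>{1..n}. y i) / n) + m * ((\<Sum>j\<in>{1..m}. z j) / m)) / (real n + real m)
      = (\<Sum>i\<in>{1..n+m}. path_append n m y z i) / (n + m)"
    using n m sum_path_append[of n m y z] by simp
  finally show ?thesis
    by simp
qed

lemma dthp_exp_moment_supermultiplicative: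
  assumes a_nonneg: "\<And>i. 0 \<le> a i" and a_summable: "summable a" and a_sum: "suminf a < 1"
    and a_mean: "summable (\<lambda>k. real k * a k)"
    and g: "concave_on {0..1} g" and n: "1 \<le> n" and m: "1 \<le> m"
  shows "exp (- (\<Sum>k. real k * a k) / (1 - suminf a)) * dthp_exp_moment a g n * dthp_exp_moment a g m
    \<le> dthp_exp_moment a g (n + m)"
proof -
  define C where "C = exp (- (\<Sum>k. real k * a k) / (1 - suminf a))"
  define E where "E k x = exp (k * g ((\<Sum>i\<in>{1..k}. x i) / k))" for k and x :: "nat \<Rightarrow> real"
  have moment: "dthp_exp_moment a g k = (\<Sum>x\<in>binary_paths k. dthp_path_prob a x k * E k x)" for k
    unfolding dthp_exp_moment_def E_def ..
  have prob_nonneg: "0 \<le> dthp_path_prob a x k" if "x \<in> binary_paths k" for x k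
    using a_nonneg a_summable a_sum binary_paths_range[OF that] by (intro dthp_path_prob_nonneg) auto
  have key: "C * (dthp_path_prob a y n * E n y) * (dthp_path_prob a z m * E m z)
      \<le> dthp_path_prob a (path_append n m y z) (n + m) * E (n + m) (path_append n m y z)"
    if y: "y \<in> binary_paths n" and z: "z \<in> binary_paths m" for y z
  proof -
    have "E n y * E m z \<le> E (n + m) (path_append n m y z)"
      using concave_on_path_append[OF g y z n m] unfolding E_def by (simp add: exp_add[symmetric])
    moreover have "C * dthp_path_prob a y n * dthp_path_prob a z m
        \<le> dthp_path_prob a (path_append n m y z) (n + m)"
      unfolding C_def using a_nonneg a_summable a_sum a_mean y z by (rule dthp_path_prob_append_ge)
    ultimately have "(C * dthp_path_prob a y n * dthp_path_prob a z m) * (E n y * E m z)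
        \<le> dthp_path_prob a (path_append n m y z) (n + m) * E (n + m) (path_append n m y z)"
      using prob_nonneg[OF y] prob_nonneg[OF z] by (intro mult_mono') (auto simp: C_def E_def)
    then show ?thesis
      by (simp add: mult_ac)
  qed
  have "C * dthp_exp_moment a g n * dthp_exp_moment a g m
      = (\<Sum>y\<in>binary_paths n. \<Sum>z\<in>binary_paths m.
            C * (dthp_path_prob a y n * E n y) * (dthp_path_prob a z m * E m z))"
    by (simp only: moment sum_distrib_left sum_distrib_right) (rule sum.swap)
  also have "\<dots> \<le> (\<Sum>y\<in>binary_paths n. \<Sum>z\<in>binary_paths m.
            dthp_path_prob a (path_append n m y z) (n + m) * E (n + m) (path_append n m y z))"
    by (intro sum_mono key)
  also have "\<dots> = dthp_exp_moment a g (n + m)"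
    unfolding moment by (rule sum_binary_paths_add[symmetric])
  finally show ?thesis
    unfolding C_def .
qed

theorem lemma4p4:
  fixes M :: "'w measure" and a :: "nat \<Rightarrow> real" and \<xi> :: "nat \<Rightarrow> 'w \<Rightarrow> real"
    and g :: "real \<Rightarrow> real"
  assumes a_pos: "\<And>i. a i > 0"
    and a_summable: "summable a" and a_sum_lt1: "(\<Sum>i. a i) < 1"
    and a_mean: "summable (\<lambda>i. real i * a i)"
    and dthp: "is_dthp M a \<xi>"
    and g_cont: "continuous_on {0..1} g" and g_concave: "concave_on {0..1} g"
  shows "\<exists>\<Gamma>::real. (\<lambda>n. ln (integral\<^sup>L M (\<lambda>\<omega>. exp (real n * g (dthp_H \<xi> n \<omega> / real n))))
                         / real n) \<longlonglongrightarrow> \<Gamma>"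
proof -
  have a_nonneg: "\<And>i. 0 \<le> a i"
    using a_pos less_imp_le by blast
  have "bounded (g ` {0..1})"
    using compact_continuous_image[OF g_cont compact_Icc] by (rule compact_imp_bounded)
  then obtain B where "\<forall>y\<in>g ` {0..1}. norm y \<le> B"
    unfolding bounded_iff by blast
  then have B: "\<And>t. t \<in> {0..1} \<Longrightarrow> \<bar>g t\<bar> \<le> B"
    by auto
  have bounds: "dthp_exp_moment a g n \<in> {exp (- n * B)..exp (n * B)}" if "1 \<le> n" for n
    using dthp a_nonneg a_summable a_sum_lt1 B that by (intro dthp_exp_moment_bounds) auto
  show ?thesis
    unfolding dthp_integral_eq_exp_moment[OF dthp]
  proof (rule supermultiplicative_ln_div_convergent)
    show "0 < dthp_exp_moment a g n" if "1 \<le> n" for n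
      using bounds[OF that] by (auto intro: less_le_trans[OF exp_gt_zero])
    show "dthp_exp_moment a g n \<le> exp (n * B)" if "1 \<le> n" for n
      using bounds[OF that] by simp
  qed (use dthp_exp_moment_supermultiplicative[OF a_nonneg a_summable a_sum_lt1 a_mean g_concave] in auto)
qed

end
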